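(* Let $r\ge3$. For any partition $\mathcal{Q}$ of $[r]=\{1,\dots,r\}$ with $|\mathcal{Q}|\ge2$ and any $\psi:2^{[r]}\to\mathbb{R}$ with $\psi(\emptyset)=1$, we have $\mathrm{cum}_{[r]}(\psi^{\mathcal{Q}})=0$.
   Context: $\mathfrak{P}_{[r]}$ is the set of cyclically ordered partitions of $[r]$ (partitions into non-empty blocks together with a cyclic order on the blocks), $|\mathcal{P}|$ the number of blocks. For $\phi:2^{[r]}\to\mathbb{R}$, $\mathrm{cum}_{[r]}(\phi)=\sum_{\mathcal{P}\in\mathfrak{P}_{[r]}}(-1)^{|\mathcal{P}|-1}\prod_{I\in\mathcal{P}}\phi(I)$. For a partition $\mathcal{Q}$ of $[r]$, $\psi^{\mathcal{Q}}(I)=\prod_{J\in\mathcal{Q}}\psi(I\cap J)$. *)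

theory Defs
  imports Complex_Main "HOL-Library.Disjoint_Sets" "HOL-Combinatorics.Permutations"
begin

text \<open>A cyclic order on a finite set B of blocks is represented by its successor map:
  a permutation of B consisting of a single cycle through all elements of B.\<close>
definition cyclic_order_on :: "'b set \<Rightarrow> ('b \<Rightarrow> 'b) \<Rightarrow> bool" where
  "cyclic_order_on B \<sigma> \<longleftrightarrow> \<sigma> permutes B \<and> (\<forall>x\<in>B. \<forall>y\<in>B. \<exists>n. (\<sigma> ^^ n) x = y)"

definition cyc_partitions :: "'a set \<Rightarrow> ('a set set \<times> ('a set \<Rightarrow> 'a set)) set" where
  "cyc_partitions A = {(P, \<sigma>). partition_on A P \<and> cyclic_order_on P \<sigma>}"

definition cum :: "'a set \<Rightarrow> ('a set \<Rightarrow> real) \<Rightarrow> real" where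
  "cum A \<phi> = (\<Sum>(P, \<sigma>)\<in>cyc_partitions A. (-1) ^ (card P - 1) * (\<Prod>I\<in>P. \<phi> I))"

definition psi_part :: "('a set \<Rightarrow> real) \<Rightarrow> 'a set set \<Rightarrow> 'a set \<Rightarrow> real" where
  "psi_part \<psi> Q I = (\<Prod>J\<in>Q. \<psi> (I \<inter> J))"

end

theory Submission
  imports Defs "HOL-Combinatorics.Cycles"
begin

text \<open>For \<open>\<phi> {} = 1\<close>, the signed sum \<open>L \<phi> C\<close> (\<open>conv_inverse\<close> below) of
  \<open>(-1)\<^sup>k \<phi> B\<^sub>1 \<cdots> \<phi> B\<^sub>k\<close> over the ordered set partitions \<open>(B\<^sub>1, \<dots>, B\<^sub>k)\<close> of \<open>C\<close> is the inverse
  of \<open>\<phi>\<close> for subset convolution. Choosing the block that contains a fixed point \<open>a\<close> as the first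
  block turns cyclic orders into linear ones, so \<open>cum A \<phi> = \<Sum>{\<phi> S * L \<phi> (A - S) | a \<in> S \<subseteq> A}\<close>.
  Since \<open>\<psi>\<^sup>Q\<close> is multiplicative over the blocks of \<open>Q\<close>, so is its inverse,
  \<open>L \<psi>\<^sup>Q C = \<Prod>J\<in>Q. L \<psi> (C \<inter> J)\<close>, and the whole sum factors over the blocks. The factor of a
  block \<open>J\<close> not containing \<open>a\<close> is \<open>\<Sum>T\<subseteq>J. \<psi> T * L \<psi> (J - T)\<close>, which vanishes as \<open>J \<noteq> {}\<close>.\<close>

definition ordered_partition_on :: "'a set \<Rightarrow> 'a set list \<Rightarrow> bool" where
  "ordered_partition_on C xs \<longleftrightarrow> distinct xs \<and> partition_on C (set xs)"

lemma ordered_partition_on_Nil [simp]: "ordered_partition_on C [] \<longleftrightarrow> C = {}"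
  by (auto simp: ordered_partition_on_def partition_on_def)

lemma ordered_partition_on_Cons [simp]:
  "ordered_partition_on C (S # xs) \<longleftrightarrow> S \<noteq> {} \<and> S \<subseteq> C \<and> ordered_partition_on (C - S) xs"
proof
  assume op: "ordered_partition_on C (S # xs)"
  then have "disjnt S (\<Union>(set xs))"
    by (auto simp: ordered_partition_on_def partition_on_def disjoint_def disjnt_def)
  with op show "S \<noteq> {} \<and> S \<subseteq> C \<and> ordered_partition_on (C - S) xs"
    by (auto simp: ordered_partition_on_def partition_on_insert)
next
  assume *: "S \<noteq> {} \<and> S \<subseteq> C \<and> ordered_partition_on (C - S) xs"
  then have "\<Union>(set xs) = C - S" "{} \<notin> set xs"
    by (auto simp: ordered_partition_on_def partition_on_def)
  then have "disjnt S (\<Union>(set xs))" "S \<notin> set xs"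
    using * by (auto simp: disjnt_def)
  with * show "ordered_partition_on C (S # xs)"
    by (auto simp: ordered_partition_on_def partition_on_insert)
qed

lemma ordered_partition_on_empty [simp]: "ordered_partition_on {} xs \<longleftrightarrow> xs = []"
  by (cases xs) auto

lemma finite_ordered_partitions: "finite C \<Longrightarrow> finite {xs. ordered_partition_on C xs}"
  by (rule finite_subset[OF _ finite_subset_distinct[of "Pow C"]])
     (auto simp: ordered_partition_on_def dest: partition_onD1)

lemma ordered_partitions_by_head:
  assumes "C \<noteq> {}"
  shows "{xs. ordered_partition_on C xs \<and> P (hd xs)}
       = (\<Union>S\<in>{S\<in>Pow C - {{}}. P S}. Cons S ` {ys. ordered_partition_on (C - S) ys})"
proof (rule set_eqI)
  fix xs
  show "xs \<in> {xs. ordered_partition_on C xs \<and> P (hd xs)} \<longleftrightarrow>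
        xs \<in> (\<Union>S\<in>{S\<in>Pow C - {{}}. P S}. Cons S ` {ys. ordered_partition_on (C - S) ys})"
    using assms by (cases xs) auto
qed

definition conv_inverse :: "('a set \<Rightarrow> 'b::comm_ring_1) \<Rightarrow> 'a set \<Rightarrow> 'b" where
  "conv_inverse \<phi> C =
     (\<Sum>xs | ordered_partition_on C xs. (-1) ^ length xs * prod_list (map \<phi> xs))"

lemma conv_inverse_empty [simp]: "conv_inverse \<phi> {} = 1"
  by (simp add: conv_inverse_def)

lemma sum_ordered_partitions_by_head:
  assumes "finite C" "C \<noteq> {}"
  shows "(\<Sum>xs | ordered_partition_on C xs \<and> P (hd xs). (-1) ^ length xs * prod_list (map \<phi> xs))
       = - (\<Sum>S | S \<in> Pow C - {{}} \<and> P S. \<phi> S * conv_inverse \<phi> (C - S))"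
proof -
  have "(\<Sum>xs | ordered_partition_on C xs \<and> P (hd xs). (-1) ^ length xs * prod_list (map \<phi> xs))
      = (\<Sum>S | S \<in> Pow C - {{}} \<and> P S. \<Sum>xs\<in>Cons S ` {ys. ordered_partition_on (C - S) ys}.
           (-1) ^ length xs * prod_list (map \<phi> xs))"
    unfolding ordered_partitions_by_head[OF assms(2)] using assms(1)
    by (intro sum.UNION_disjoint) (auto intro: finite_ordered_partitions)
  also have "\<dots> = (\<Sum>S | S \<in> Pow C - {{}} \<and> P S. - (\<phi> S * conv_inverse \<phi> (C - S)))"
    unfolding conv_inverse_def
    by (intro sum.cong refl, subst sum.reindex) (auto simp: sum_distrib_left sum_negf mult_ac)
  finally show ?thesis by (simp add: sum_negf)
qed

lemma conv_inverse_rec: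
  assumes "finite C" "C \<noteq> {}"
  shows "conv_inverse \<phi> C = - (\<Sum>S\<in>Pow C - {{}}. \<phi> S * conv_inverse \<phi> (C - S))"
proof -
  have "{xs. ordered_partition_on C xs \<and> True} = {xs. ordered_partition_on C xs}"
    and "{S. S \<in> Pow C - {{}} \<and> True} = Pow C - {{}}" by auto
  then show ?thesis
    using sum_ordered_partitions_by_head[OF assms, where P = "\<lambda>_. True" and \<phi> = \<phi>]
    by (simp only: conv_inverse_def[of \<phi> C])
qed

lemma conv_inverse_right:
  assumes "finite C" "\<phi> {} = 1"
  shows "(\<Sum>S\<in>Pow C. \<phi> S * conv_inverse \<phi> (C - S)) = (if C = {} then 1 else 0)"
proof (cases "C = {}")
  case False
  then show ?thesis
    using assms conv_inverse_rec[OF assms(1) False, of \<phi>]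
    by (subst sum.remove[of _ "{}"]) auto
qed (use assms in simp)

lemma conv_inverse_unique:
  assumes "finite C" "\<phi> {} = 1"
    and "\<And>D. D \<subseteq> C \<Longrightarrow> (\<Sum>S\<in>Pow D. \<phi> S * g (D - S)) = (if D = {} then 1 else 0)"
  shows "g C = conv_inverse \<phi> C"
  using assms(1,3)
proof (induction C rule: finite_psubset_induct)
  case (psubset C)
  have split: "(\<Sum>S\<in>Pow C. \<phi> S * h (C - S)) = h C + (\<Sum>S\<in>Pow C - {{}}. \<phi> S * h (C - S))"
    for h :: "'a set \<Rightarrow> 'b"
    using psubset(1) assms(2) by (subst sum.remove[of _ "{}"]) auto
  have rest: "(\<Sum>S\<in>Pow C - {{}}. \<phi> S * g (C - S))
            = (\<Sum>S\<in>Pow C - {{}}. \<phi> S * conv_inverse \<phi> (C - S))"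
  proof (intro sum.cong refl)
    fix S assume "S \<in> Pow C - {{}}"
    then have "C - S \<subset> C" by blast
    then show "\<phi> S * g (C - S) = \<phi> S * conv_inverse \<phi> (C - S)"
      using psubset.IH psubset.prems by auto
  qed
  have "g C + (\<Sum>S\<in>Pow C - {{}}. \<phi> S * conv_inverse \<phi> (C - S)) = (if C = {} then 1 else 0)"
    using psubset.prems[of C] split[of g] rest by simp
  moreover have "conv_inverse \<phi> C + (\<Sum>S\<in>Pow C - {{}}. \<phi> S * conv_inverse \<phi> (C - S))
               = (if C = {} then 1 else 0)"
    using conv_inverse_right[of C \<phi>, OF psubset(1) assms(2)] split[of "conv_inverse \<phi>"] by simp
  ultimately show ?case by (metis add_right_cancel)
qed

lemma funpow_cycle_of_list_nth:
  assumes "distinct xs" "j < length xs"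
  shows "(cycle_of_list xs ^^ n) (xs ! j) = xs ! ((n + j) mod length xs)"
proof -
  have "map (cycle_of_list xs ^^ n) xs ! j = rotate n xs ! j"
    using cyclic_rotation[OF assms(1)] by simp
  then show ?thesis using assms by (simp add: nth_rotate add.commute)
qed

lemma cyclic_order_on_cycle_of_list:
  assumes "distinct xs"
  shows "cyclic_order_on (set xs) (cycle_of_list xs)"
  unfolding cyclic_order_on_def
proof (intro conjI ballI)
  show "cycle_of_list xs permutes set xs" by (rule cycle_permutes)
  fix x y assume "x \<in> set xs" "y \<in> set xs"
  then obtain i j where ij: "i < length xs" "j < length xs" "x = xs ! i" "y = xs ! j"
    by (auto simp: in_set_conv_nth)
  have "(cycle_of_list xs ^^ (j + length xs - i)) x = xs ! ((j + length xs - i + i) mod length xs)"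
    using funpow_cycle_of_list_nth[OF assms ij(1)] ij by simp
  also have "(j + length xs - i + i) mod length xs = j" using ij by simp
  finally show "\<exists>n. (cycle_of_list xs ^^ n) x = y" using ij by blast
qed

lemma cycle_of_list_inject:
  assumes "distinct xs" "distinct ys" "xs \<noteq> []" "set xs = set ys" "hd xs = hd ys"
    and "cycle_of_list xs = cycle_of_list ys"
  shows "xs = ys"
proof -
  have len: "length xs = length ys"
    using distinct_card[OF assms(1)] distinct_card[OF assms(2)] assms(4) by simp
  then have "ys \<noteq> []" using assms(3) by auto
  show ?thesis
  proof (rule nth_equalityI[OF len])
    fix i assume "i < length xs"
    then have "xs ! i = (cycle_of_list xs ^^ i) (hd xs)" "ys ! i = (cycle_of_list ys ^^ i) (hd ys)"
      using funpow_cycle_of_list_nth[OF assms(1), of 0 i] funpow_cycle_of_list_nth[OF assms(2), of 0 i]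
        assms(3) \<open>ys \<noteq> []\<close> len by (simp_all add: hd_conv_nth)
    then show "xs ! i = ys ! i" using assms(5,6) by simp
  qed
qed

lemma cyclic_order_on_obtain_list:
  assumes "cyclic_order_on P \<sigma>" "finite P" "B \<in> P"
  obtains xs where "distinct xs" "set xs = P" "hd xs = B" "cycle_of_list xs = \<sigma>"
proof
  have perm: "\<sigma> permutes P" and conn: "\<forall>x\<in>P. \<forall>y\<in>P. \<exists>n. (\<sigma> ^^ n) x = y"
    using assms(1) unfolding cyclic_order_on_def by auto
  have pm: "permutation \<sigma>" using perm assms(2) permutation_permutes by blast
  show "distinct (support \<sigma> B)" by (rule cycle_of_permutation[OF pm])
  show set_eq: "set (support \<sigma> B) = P"
  proof
    show "set (support \<sigma> B) \<subseteq> P" unfolding support_set[OF pm]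
      using permutes_in_image[OF permutes_funpow[OF perm]] assms(3) by auto
    show "P \<subseteq> set (support \<sigma> B)" unfolding support_set[OF pm]
      using conn assms(3) by (metis rangeI subsetI)
  qed
  show "hd (support \<sigma> B) = B"
    using least_power_of_permutation(2)[OF pm] by (simp add: upt_conv_Cons)
  show "cycle_of_list (support \<sigma> B) = \<sigma>"
  proof
    fix b show "cycle_of_list (support \<sigma> B) b = \<sigma> b"
    proof (cases "b \<in> set (support \<sigma> B)")
      case True then show ?thesis using cycle_restrict[OF pm] by metis
    next
      case False then show ?thesis using id_outside_supp[OF False] set_eq
          permutes_not_in[OF perm] by metis
    qed
  qed
qed

lemma inj_on_set_cycle_of_list:
  assumes "a \<in> A"
  shows "inj_on (\<lambda>xs. (set xs, cycle_of_list xs)) {xs. ordered_partition_on A xs \<and> a \<in> hd xs}"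
proof (rule inj_onI)
  fix xs ys
  assume xs: "xs \<in> {xs. ordered_partition_on A xs \<and> a \<in> hd xs}"
    and ys: "ys \<in> {xs. ordered_partition_on A xs \<and> a \<in> hd xs}"
    and "(set xs, cycle_of_list xs) = (set ys, cycle_of_list ys)"
  then have eq: "set xs = set ys" "cycle_of_list xs = cycle_of_list ys" by simp_all
  have dist: "distinct xs" "distinct ys" and "partition_on A (set xs)"
    using xs ys by (simp_all add: ordered_partition_on_def)
  then have dj: "disjoint (set xs)" by (simp add: partition_onD2)
  have "A \<noteq> {}" using assms by blast
  then have ne: "xs \<noteq> []" "ys \<noteq> []" using xs ys by (cases xs; cases ys; simp)+
  have "hd xs \<in> set xs" by (rule hd_in_set[OF ne(1)])
  moreover have "hd ys \<in> set xs" unfolding eq(1) by (rule hd_in_set[OF ne(2)])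
  moreover have "a \<in> hd xs" "a \<in> hd ys" using xs ys by simp_all
  ultimately have "hd xs = hd ys" using disjointD[OF dj] by blast
  then show "xs = ys" by (rule cycle_of_list_inject[OF dist ne(1) eq(1) _ eq(2)])
qed

lemma bij_betw_ordered_partitions_cyc_partitions:
  assumes "finite A" "a \<in> A"
  shows "bij_betw (\<lambda>xs. (set xs, cycle_of_list xs))
           {xs. ordered_partition_on A xs \<and> a \<in> hd xs} (cyc_partitions A)"
proof (intro bij_betw_imageI[OF inj_on_set_cycle_of_list[OF assms(2)]] equalityI subsetI)
  fix p assume "p \<in> (\<lambda>xs. (set xs, cycle_of_list xs)) ` {xs. ordered_partition_on A xs \<and> a \<in> hd xs}"
  then obtain xs where "ordered_partition_on A xs" "p = (set xs, cycle_of_list xs)" by blast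
  then show "p \<in> cyc_partitions A"
    using cyclic_order_on_cycle_of_list[of xs]
    by (simp add: cyc_partitions_def ordered_partition_on_def)
next
  fix p assume "p \<in> cyc_partitions A"
  then obtain P \<sigma> where p: "p = (P, \<sigma>)" "partition_on A P" "cyclic_order_on P \<sigma>"
    unfolding cyc_partitions_def by auto
  have "finite P" using finite_elements[OF assms(1) p(2)] .
  have "A = \<Union>P" using partition_onD1[OF p(2)] .
  then obtain B where "B \<in> P" "a \<in> B" using assms(2) by blast
  obtain xs where xs: "distinct xs" "set xs = P" "hd xs = B" "cycle_of_list xs = \<sigma>"
    by (rule cyclic_order_on_obtain_list[OF p(3) \<open>finite P\<close> \<open>B \<in> P\<close>])
  have "xs \<in> {xs. ordered_partition_on A xs \<and> a \<in> hd xs}"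
    using xs p(2) \<open>a \<in> B\<close> by (simp add: ordered_partition_on_def)
  moreover have "p = (set xs, cycle_of_list xs)" using xs p(1) by simp
  ultimately show "p \<in> (\<lambda>xs. (set xs, cycle_of_list xs)) ` {xs. ordered_partition_on A xs \<and> a \<in> hd xs}"
    by (rule rev_image_eqI)
qed

lemma cum_eq_sum_first_block:
  assumes "finite A" "a \<in> A"
  shows "cum A \<phi> = (\<Sum>S\<in>Pow A. if a \<in> S then \<phi> S * conv_inverse \<phi> (A - S) else 0)"
proof -
  have "cum A \<phi> = (\<Sum>xs | ordered_partition_on A xs \<and> a \<in> hd xs.
                     (-1) ^ (card (set xs) - 1) * (\<Prod>I\<in>set xs. \<phi> I))"
    unfolding cum_def
    by (subst sum.reindex_bij_betw[OF bij_betw_ordered_partitions_cyc_partitions[OF assms], symmetric])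
       simp
  also have "\<dots> = - (\<Sum>xs | ordered_partition_on A xs \<and> a \<in> hd xs.
                       (-1) ^ length xs * prod_list (map \<phi> xs))"
    unfolding sum_negf[symmetric]
  proof (intro sum.cong refl)
    fix xs assume xs: "xs \<in> {xs. ordered_partition_on A xs \<and> a \<in> hd xs}"
    then have "xs \<noteq> []" using assms(2) by auto
    moreover have "distinct xs" using xs by (simp add: ordered_partition_on_def)
    ultimately show "(-1) ^ (card (set xs) - 1) * (\<Prod>I\<in>set xs. \<phi> I)
             = - ((-1) ^ length xs * prod_list (map \<phi> xs))"
      by (cases xs) (auto simp: distinct_card prod.distinct_set_conv_list)
  qed
  also have "\<dots> = (\<Sum>S\<in>{S \<in> Pow A. a \<in> S}. \<phi> S * conv_inverse \<phi> (A - S))"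
  proof -
    have "A \<noteq> {}" and "{S. S \<in> Pow A - {{}} \<and> a \<in> S} = {S \<in> Pow A. a \<in> S}"
      using assms(2) by auto
    with sum_ordered_partitions_by_head[OF assms(1) this(1), where P = "\<lambda>S. a \<in> S" and \<phi> = \<phi>]
    show ?thesis by (simp only: minus_minus)
  qed
  also have "\<dots> = (\<Sum>S\<in>Pow A. if a \<in> S then \<phi> S * conv_inverse \<phi> (A - S) else 0)"
    using assms(1) by (intro sum.inter_filter) simp
  finally show ?thesis .
qed

lemma sum_Pow_split:
  assumes "finite C"
  shows "(\<Sum>S\<in>Pow C. g S) = (\<Sum>T\<in>Pow (C \<inter> J). \<Sum>U\<in>Pow (C - J). g (T \<union> U))"
proof -
  have "(\<Sum>S\<in>Pow C. g S) = (\<Sum>(T, U)\<in>Pow (C \<inter> J) \<times> Pow (C - J). g (T \<union> U))"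
    by (rule sum.reindex_bij_witness[where i = "\<lambda>(T, U). T \<union> U" and j = "\<lambda>S. (S \<inter> J, S - J)"])
       (auto simp: Int_Diff_Un)
  then show ?thesis by (simp add: sum.cartesian_product)
qed

lemma sum_Pow_prod_Int:
  fixes f :: "'a set \<Rightarrow> 'a set \<Rightarrow> 'b::comm_semiring_1"
  assumes "finite Q" "disjoint Q" "finite C" "C \<subseteq> \<Union>Q"
  shows "(\<Sum>S\<in>Pow C. \<Prod>J\<in>Q. f J (S \<inter> J)) = (\<Prod>J\<in>Q. \<Sum>T\<in>Pow (C \<inter> J). f J T)"
  using assms
proof (induction Q arbitrary: C rule: finite_induct)
  case (insert J Q)
  have dj: "J \<inter> J' = {}" if "J' \<in> Q" for J'
    using insert.hyps(2) insert.prems(1) that by (metis disjnt_def insertCI pairwiseD)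
  have "(\<Sum>S\<in>Pow C. \<Prod>J\<in>insert J Q. f J (S \<inter> J))
      = (\<Sum>T\<in>Pow (C \<inter> J). \<Sum>U\<in>Pow (C - J). \<Prod>J\<in>insert J Q. f J ((T \<union> U) \<inter> J))"
    by (rule sum_Pow_split[OF insert.prems(2)])
  also have "\<dots> = (\<Sum>T\<in>Pow (C \<inter> J). \<Sum>U\<in>Pow (C - J). f J T * (\<Prod>J'\<in>Q. f J' (U \<inter> J')))"
  proof (intro sum.cong refl)
    fix T U assume T: "T \<in> Pow (C \<inter> J)" and U: "U \<in> Pow (C - J)"
    have "(T \<union> U) \<inter> J' = U \<inter> J'" if "J' \<in> Q" for J' using T dj[OF that] by auto
    moreover have "(T \<union> U) \<inter> J = T" using T U by auto
    ultimately show "(\<Prod>J\<in>insert J Q. f J ((T \<union> U) \<inter> J)) = f J T * (\<Prod>J'\<in>Q. f J' (U \<inter> J'))"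
      using insert.hyps by simp
  qed
  also have "\<dots> = (\<Sum>T\<in>Pow (C \<inter> J). f J T) * (\<Sum>U\<in>Pow (C - J). \<Prod>J'\<in>Q. f J' (U \<inter> J'))"
    by (simp add: sum_product)
  also have "(\<Sum>U\<in>Pow (C - J). \<Prod>J'\<in>Q. f J' (U \<inter> J')) = (\<Prod>J'\<in>Q. \<Sum>T\<in>Pow ((C - J) \<inter> J'). f J' T)"
    using insert.IH[of "C - J"] insert.prems by (auto simp: pairwise_insert)
  also have "\<dots> = (\<Prod>J'\<in>Q. \<Sum>T\<in>Pow (C \<inter> J'). f J' T)"
  proof (intro prod.cong refl)
    fix J' assume "J' \<in> Q"
    then have "(C - J) \<inter> J' = C \<inter> J'" using dj by blast
    then show "(\<Sum>T\<in>Pow ((C - J) \<inter> J'). f J' T) = (\<Sum>T\<in>Pow (C \<inter> J'). f J' T)" by simp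
  qed
  finally show ?case using insert.hyps by simp
qed simp

lemma conv_inverse_psi_part:
  assumes "finite C" "finite Q" "disjoint Q" "C \<subseteq> \<Union>Q" "\<psi> {} = 1"
  shows "conv_inverse (psi_part \<psi> Q) C = (\<Prod>J\<in>Q. conv_inverse \<psi> (C \<inter> J))"
proof (rule conv_inverse_unique[symmetric, OF assms(1)])
  show "psi_part \<psi> Q {} = 1" using assms(5) by (simp add: psi_part_def)
  fix D assume "D \<subseteq> C"
  then have D: "finite D" "D \<subseteq> \<Union>Q" using assms(1,4) finite_subset by auto
  have "(\<Sum>S\<in>Pow D. psi_part \<psi> Q S * (\<Prod>J\<in>Q. conv_inverse \<psi> ((D - S) \<inter> J)))
      = (\<Sum>S\<in>Pow D. \<Prod>J\<in>Q. \<psi> (S \<inter> J) * conv_inverse \<psi> (D \<inter> J - S \<inter> J))"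
    by (simp add: psi_part_def prod.distrib Diff_Int_distrib2)
  also have "\<dots> = (\<Prod>J\<in>Q. \<Sum>T\<in>Pow (D \<inter> J). \<psi> T * conv_inverse \<psi> (D \<inter> J - T))"
    by (rule sum_Pow_prod_Int[OF assms(2,3) D(1,2)])
  also have "\<dots> = (\<Prod>J\<in>Q. if D \<inter> J = {} then 1 else 0)"
    using D(1) by (intro prod.cong refl conv_inverse_right assms(5)) simp
  also have "\<dots> = (if D = {} then 1 else 0)"
  proof (cases "D = {}")
    case False
    then obtain x J where "x \<in> D" "J \<in> Q" "x \<in> J" using D(2) by blast
    then have "(\<Prod>J\<in>Q. if D \<inter> J = {} then 1 else 0 :: real) = 0"
      using assms(2) by (subst prod_zero) auto
    then show ?thesis using False by simp
  qed simp
  finally show "(\<Sum>S\<in>Pow D. psi_part \<psi> Q S * (\<Prod>J\<in>Q. conv_inverse \<psi> ((D - S) \<inter> J)))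
              = (if D = {} then 1 else 0)" .
qed

lemma cum_psi_part_eq_prod:
  assumes "finite A" "partition_on A Q" "\<psi> {} = 1" "a \<in> A"
  shows "cum A (psi_part \<psi> Q) =
    (\<Prod>J\<in>Q. \<Sum>T\<in>Pow J. if a \<in> J \<and> a \<notin> T then 0 else \<psi> T * conv_inverse \<psi> (J - T))"
proof -
  define g where "g J T = (if a \<in> J \<and> a \<notin> T then 0 else \<psi> T * conv_inverse \<psi> (J - T))" for J T
  have fQ: "finite Q" using finite_elements[OF assms(1,2)] .
  have dQ: "disjoint Q" and UQ: "\<Union>Q = A"
    using assms(2) by (auto dest: partition_onD1 partition_onD2)
  obtain J0 where J0: "J0 \<in> Q" "a \<in> J0" using assms(4) UQ by blast
  have "cum A (psi_part \<psi> Q)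
      = (\<Sum>S\<in>Pow A. if a \<in> S then psi_part \<psi> Q S * conv_inverse (psi_part \<psi> Q) (A - S) else 0)"
    by (rule cum_eq_sum_first_block[OF assms(1,4)])
  also have "\<dots> = (\<Sum>S\<in>Pow A. \<Prod>J\<in>Q. g J (S \<inter> J))"
  proof (intro sum.cong refl)
    fix S assume "S \<in> Pow A"
    show "(if a \<in> S then psi_part \<psi> Q S * conv_inverse (psi_part \<psi> Q) (A - S) else 0)
        = (\<Prod>J\<in>Q. g J (S \<inter> J))"
    proof (cases "a \<in> S")
      case True
      have "finite (A - S)" "A - S \<subseteq> \<Union>Q" using assms(1) UQ by auto
      then have "conv_inverse (psi_part \<psi> Q) (A - S) = (\<Prod>J\<in>Q. conv_inverse \<psi> ((A - S) \<inter> J))"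
        using conv_inverse_psi_part fQ dQ assms(3) by blast
      moreover have "g J (S \<inter> J) = \<psi> (S \<inter> J) * conv_inverse \<psi> ((A - S) \<inter> J)" if "J \<in> Q" for J
      proof -
        have "(A - S) \<inter> J = J - S \<inter> J" using that UQ by blast
        then show ?thesis using True by (simp add: g_def)
      qed
      ultimately show ?thesis using True by (simp add: psi_part_def prod.distrib)
    next
      case False
      then have "g J0 (S \<inter> J0) = 0" using J0(2) by (simp add: g_def)
      then have "(\<Prod>J\<in>Q. g J (S \<inter> J)) = 0" using fQ J0(1) by (intro prod_zero) auto
      then show ?thesis using False by simp
    qed
  qed
  also have "\<dots> = (\<Prod>J\<in>Q. \<Sum>T\<in>Pow (A \<inter> J). g J T)"
    by (rule sum_Pow_prod_Int[OF fQ dQ assms(1)]) (use UQ in blast)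
  also have "\<dots> = (\<Prod>J\<in>Q. \<Sum>T\<in>Pow J. g J T)"
  proof (intro prod.cong refl)
    fix J assume "J \<in> Q"
    then have "A \<inter> J = J" using UQ by blast
    then show "(\<Sum>T\<in>Pow (A \<inter> J). g J T) = (\<Sum>T\<in>Pow J. g J T)" by simp
  qed
  finally show ?thesis by (simp only: g_def)
qed

lemma cum_psi_part_eq_0:
  assumes "finite A" "partition_on A Q" "card Q \<ge> 2" "\<psi> {} = 1"
  shows "cum A (psi_part \<psi> Q) = 0"
proof -
  have fQ: "finite Q" using finite_elements[OF assms(1,2)] .
  have "\<not> card Q \<le> Suc 0" using assms(3) by simp
  then obtain J1 J2 where J12: "J1 \<in> Q" "J2 \<in> Q" "J1 \<noteq> J2"
    using card_le_Suc0_iff_eq[OF fQ] by blast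
  have "{} \<notin> Q" using assms(2) by (rule partition_onD3)
  then obtain a where "a \<in> J1" using J12(1) by (metis ex_in_conv)
  moreover have "disjoint Q" using assms(2) by (rule partition_onD2)
  ultimately have "a \<notin> J2" using J12 by (meson disjnt_iff pairwiseD)
  have "J2 \<subseteq> A" "a \<in> A" using J12 \<open>a \<in> J1\<close> partition_onD1[OF assms(2)] by blast+
  then have "finite J2" "J2 \<noteq> {}" using assms(1) J12(2) \<open>{} \<notin> Q\<close> finite_subset by auto
  then have "(\<Sum>T\<in>Pow J2. if a \<in> J2 \<and> a \<notin> T then 0 else \<psi> T * conv_inverse \<psi> (J2 - T)) = 0"
    using conv_inverse_right[of J2 \<psi>, OF _ assms(4)] \<open>a \<notin> J2\<close> by simp
  then have "(\<Prod>J\<in>Q. \<Sum>T\<in>Pow J. if a \<in> J \<and> a \<notin> T then 0 else \<psi> T * conv_inverse \<psi> (J - T)) = 0"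
    using J12(2) by (intro prod_zero[OF fQ]) blast
  then show ?thesis using cum_psi_part_eq_prod[of A Q \<psi> a] assms \<open>a \<in> A\<close> by simp
qed

theorem proposition8p1:
  fixes r :: nat and Q :: "nat set set" and \<psi> :: "nat set \<Rightarrow> real"
  assumes "r \<ge> 3"
    and "partition_on {1..r} Q"
    and "card Q \<ge> 2"
    and "\<psi> {} = 1"
  shows "cum {1..r} (psi_part \<psi> Q) = 0"
  using cum_psi_part_eq_0[of "{1..r}" Q \<psi>] assms by simp

end
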